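(* Let $G$ be a finite simple graph with $\nu_0(G)\leq 2$. Then $I(G)^{[k]}$ is linearly related for all $k\geq 2$ (where the zero ideal is regarded as linearly related).
   Context: $G$ is a finite simple graph on vertex set $\{x_1,\ldots,x_n\}$ identified with the variables of $S=K[x_1,\ldots,x_n]$ ($K$ a field); edges are identified with degree-2 monomials. $I(G)^{[k]}$ is generated by all products $e_1\cdots e_k$ over $k$-matchings of $G$. A gap of $G$ is a pair of disjoint edges $e,f$ such that no edge of $G$ joins a vertex of $e$ to a vertex of $f$. A restricted matching of $G$ is a matching $M$ containing an edge $e$ such that $\{e,f\}$ is a gap for every $f\in M\setminus\{e\}$; $\nu_0(G)$ is the maximum size of a restricted matching. A graded ideal $I$ generated in a single degree $d$ is linearly related if $\dim_K\operatorname{Tor}_1^S(I,K)_j=0$ for all $j\neq d+1$. *)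

theory Defs
  imports Main "HOL-Library.Poly_Mapping"
begin

(* Polynomial ring S = K[x_v | v :: 'v] over a field 'k ('v finite):
   polynomials are finitely supported maps from monomials ('v =>0 nat) to 'k,
   with the convolution product of HOL-Library.Poly_Mapping. *)
type_synonym ('v,'k) poly = "('v \<Rightarrow>\<^sub>0 nat) \<Rightarrow>\<^sub>0 'k"

definition var :: "'v \<Rightarrow> ('v,'k::field) poly" where
  "var v = Poly_Mapping.single (Poly_Mapping.single v 1) 1"

definition mdeg :: "('v \<Rightarrow>\<^sub>0 nat) \<Rightarrow> nat" where
  "mdeg m = (\<Sum>v\<in>Poly_Mapping.keys m. Poly_Mapping.lookup m v)"

(* p is homogeneous of degree j (the zero polynomial is homogeneous of every degree) *)
definition homogeneous :: "('v,'k::field) poly \<Rightarrow> nat \<Rightarrow> bool" where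
  "homogeneous p j \<longleftrightarrow> (\<forall>m\<in>Poly_Mapping.keys p. mdeg m = j)"

(* simple graph on vertex set UNIV of the finite type 'v, given by its set of edges,
   each edge a 2-element set of vertices *)
definition simple_graph :: "'v set set \<Rightarrow> bool" where
  "simple_graph E \<longleftrightarrow> (\<forall>e\<in>E. card e = 2)"

definition edge_poly :: "'v set \<Rightarrow> ('v,'k::field) poly" where
  "edge_poly e = (\<Prod>v\<in>e. var v)"

definition matching :: "'v set set \<Rightarrow> 'v set set \<Rightarrow> bool" where
  "matching E M \<longleftrightarrow> M \<subseteq> E \<and> (\<forall>e\<in>M. \<forall>f\<in>M. e \<noteq> f \<longrightarrow> e \<inter> f = {})"

(* minimal monomial generators of I(G)^[k]: products e_1 ... e_k over k-matchings *)
definition sq_free_power_gens :: "'v set set \<Rightarrow> nat \<Rightarrow> ('v,'k::field) poly set" where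
  "sq_free_power_gens E k = {(\<Prod>e\<in>M. edge_poly e) | M. matching E M \<and> card M = k}"

definition gap :: "'v set set \<Rightarrow> 'v set \<Rightarrow> 'v set \<Rightarrow> bool" where
  "gap E e f \<longleftrightarrow> e \<in> E \<and> f \<in> E \<and> e \<inter> f = {} \<and> \<not> (\<exists>a\<in>e. \<exists>b\<in>f. {a, b} \<in> E)"

definition restricted_matching :: "'v set set \<Rightarrow> 'v set set \<Rightarrow> bool" where
  "restricted_matching E M \<longleftrightarrow> matching E M \<and> (\<exists>e\<in>M. \<forall>f\<in>M - {e}. gap E e f)"

(* nu_0(G); 0 if G has no edges (no restricted matching exists) *)
definition nu0 :: "'v set set \<Rightarrow> nat" where
  "nu0 E = Max (insert 0 {card M | M. restricted_matching E M})"

(* For a finite K-linearly independent set Gs of homogeneous degree-d polynomials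
   (a minimal homogeneous generating system of I = (Gs)), the first syzygy module
   Syz = ker(S(-d)^Gs -> I), elements represented as coefficient maps Gs -> S. *)
definition syzygies :: "('v,'k::field) poly set \<Rightarrow> (('v,'k) poly \<Rightarrow> ('v,'k) poly) set" where
  "syzygies Gs = {\<sigma>. (\<forall>g. g \<notin> Gs \<longrightarrow> \<sigma> g = 0) \<and> (\<Sum>g\<in>Gs. \<sigma> g * g) = 0}"

definition linear_syzygies :: "('v,'k::field) poly set \<Rightarrow> (('v,'k) poly \<Rightarrow> ('v,'k) poly) set" where
  "linear_syzygies Gs = {\<sigma> \<in> syzygies Gs. \<forall>g. homogeneous (\<sigma> g) 1}"

(* Tor_1^S(I,K) = Syz / m Syz, so Tor_1^S(I,K)_j = 0 for all j \<noteq> d+1 iff Syz is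
   generated as an S-module by its elements of degree d+1 (the linear syzygies). *)
definition linearly_related :: "('v,'k::field) poly set \<Rightarrow> bool" where
  "linearly_related Gs \<longleftrightarrow>
     (\<forall>\<sigma>\<in>syzygies Gs. \<exists>T c. finite T \<and> T \<subseteq> linear_syzygies Gs \<and>
        \<sigma> = (\<lambda>g. \<Sum>\<tau>\<in>T. c \<tau> * \<tau> g))"

end

theory Submission
  imports Defs "HOL.Modules" "HOL-Library.Function_Algebras" "HOL-Library.Product_Lexorder"
begin

(*
  The generators of I(G)^[k] are the squarefree monomials x_U, U the vertex set of a k-matching.
  A syzygy of squarefree monomials of one degree splits into multidegrees, and in multidegree m it
  is a combination with coefficient sum zero of the unit vectors at the generators dividing x^m.
  So the family is linearly related once, for every W, any two generators dividing x_W are joined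
  by a chain of generators dividing x_W in which consecutive sets differ by exchanging one element:
  a link from A to B = A - {a} + {b} is the linear syzygy x_b e_A - x_a e_B.

  For two k-matchings M, N of a graph with nu_0 <= 2 such a chain inside V(M) + V(N) is built by
  induction on (|V(M) - V(N)|, |M - N|): an edge of one matching meeting an edge of the other one
  is swapped in, an edge joining the parts of M and N outside each other is used directly, and if
  e in M and f in N form a gap, then nu_0 <= 2 forces any further edge of M to be adjacent to both
  e and f, which allows a swap of two edges at once.
*)

section \<open>Squarefree monomials\<close>

definition set_exponent :: "'v set \<Rightarrow> 'v \<Rightarrow>\<^sub>0 nat" where
  "set_exponent U = (\<Sum>v\<in>U. Poly_Mapping.single v 1)"

definition set_monomial :: "'v set \<Rightarrow> ('v,'k::field) poly" where
  "set_monomial U = Poly_Mapping.single (set_exponent U) 1"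

lemma lookup_set_exponent:
  "finite U \<Longrightarrow> Poly_Mapping.lookup (set_exponent U) v = (if v \<in> U then 1 else 0)"
  unfolding set_exponent_def lookup_sum lookup_single by (simp add: when_def)

lemma keys_set_exponent: "finite U \<Longrightarrow> Poly_Mapping.keys (set_exponent U) = U"
  by (auto simp: in_keys_iff lookup_set_exponent split: if_splits)

lemma set_monomial_eq_iff [simp]:
  assumes "finite A" "finite B"
  shows "(set_monomial A :: ('v,'k::field) poly) = set_monomial B \<longleftrightarrow> A = B"
proof
  assume "(set_monomial A :: ('v,'k) poly) = set_monomial B"
  then have "set_exponent A = set_exponent B"
    unfolding set_monomial_def by (metis lookup_single_eq lookup_single_not_eq one_neq_zero)
  then show "A = B" by (metis assms keys_set_exponent)
qed simp

lemma var_mult_set_monomial: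
  "finite U \<Longrightarrow> v \<notin> U \<Longrightarrow> var v * set_monomial U = (set_monomial (insert v U) :: ('v,'k::field) poly)"
  unfolding set_monomial_def set_exponent_def var_def by (simp add: mult_single)

lemma prod_var_eq_set_monomial:
  "finite U \<Longrightarrow> (\<Prod>v\<in>U. var v) = (set_monomial U :: ('v,'k::field) poly)"
proof (induction U rule: finite_induct)
  case empty
  show ?case by (simp add: set_monomial_def set_exponent_def)
qed (simp add: var_mult_set_monomial)

lemma diff_set_exponent_insert:
  assumes "finite S" "b \<notin> S" "insert b S \<subseteq> Poly_Mapping.keys m"
  shows "m - set_exponent (insert b S) + Poly_Mapping.single b 1 = m - set_exponent S"
proof (rule poly_mapping_eqI)
  fix v
  have "Poly_Mapping.lookup m b \<ge> 1" using assms(3) by (simp add: in_keys_iff Suc_le_eq)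
  then show "Poly_Mapping.lookup (m - set_exponent (insert b S) + Poly_Mapping.single b 1) v
      = Poly_Mapping.lookup (m - set_exponent S) v"
    using assms
    by (cases "v = b") (auto simp: lookup_add lookup_minus lookup_set_exponent lookup_single)
qed

lemma homogeneous_var: "homogeneous (var v :: ('v,'k::field) poly) 1"
  unfolding homogeneous_def var_def mdeg_def by simp

lemma poly_mapping_sum_single:
  "p = (\<Sum>\<alpha>\<in>Poly_Mapping.keys p. Poly_Mapping.single \<alpha> (Poly_Mapping.lookup p \<alpha>))"
  by (rule poly_mapping_eqI) (simp add: lookup_sum lookup_single when_def in_keys_iff)

lemma single_sum: "Poly_Mapping.single k (\<Sum>x\<in>A. f x) = (\<Sum>x\<in>A. Poly_Mapping.single k (f x))"
  by (induction A rule: infinite_finite_induct) (simp_all add: single_add)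

section \<open>Linear syzygies of squarefree monomials\<close>

interpretation syz: module "\<lambda>p (\<sigma> :: ('v,'k::field) poly \<Rightarrow> ('v,'k) poly) g. p * \<sigma> g"
  by unfold_locales (auto simp: algebra_simps fun_eq_iff)

lemma sum_fun_apply: "(\<Sum>a\<in>A. f a) x = (\<Sum>a\<in>A. f a x)"
  by (induction A rule: infinite_finite_induct) auto

lemma linearly_related_iff_span:
  fixes Gs :: "('v,'k::field) poly set"
  shows "linearly_related Gs \<longleftrightarrow> syzygies Gs \<subseteq> syz.span (linear_syzygies Gs)"
proof -
  have "(\<exists>T c. finite T \<and> T \<subseteq> linear_syzygies Gs \<and> \<sigma> = (\<lambda>g. \<Sum>\<tau>\<in>T. c \<tau> * \<tau> g)) \<longleftrightarrow>
      \<sigma> \<in> syz.span (linear_syzygies Gs)" for \<sigma> :: "('v,'k) poly \<Rightarrow> ('v,'k) poly"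
    unfolding syz.span_explicit by (auto simp: fun_eq_iff sum_fun_apply)
  then show ?thesis unfolding linearly_related_def by blast
qed

lemma (in module) sum_scale_fibres_eq_zero:
  assumes "finite T" "\<And>m. (\<Sum>t\<in>{t\<in>T. deg t = m}. c t) = 0"
  shows "(\<Sum>t\<in>T. c t *s v (deg t)) = 0"
proof -
  have "(\<Sum>t\<in>T. c t *s v (deg t)) = (\<Sum>m\<in>deg ` T. \<Sum>t\<in>{t\<in>T. deg t = m}. c t *s v (deg t))"
    by (rule sum.image_gen[OF assms(1)])
  also have "\<dots> = (\<Sum>m\<in>deg ` T. \<Sum>t\<in>{t\<in>T. deg t = m}. c t *s v m)"
    by (intro sum.cong) auto
  also have "\<dots> = (\<Sum>m\<in>deg ` T. (\<Sum>t\<in>{t\<in>T. deg t = m}. c t) *s v m)"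
    by (simp add: scale_sum_left)
  finally show ?thesis by (simp add: assms(2))
qed

definition exchange_step :: "'v set set \<Rightarrow> 'v set \<Rightarrow> 'v set \<Rightarrow> bool" where
  "exchange_step \<U> A B \<longleftrightarrow> A \<in> \<U> \<and> B \<in> \<U> \<and> (\<exists>a\<in>A. \<exists>b. b \<notin> A \<and> B = insert b (A - {a}))"

lemma exchange_step_sym: "symp (exchange_step \<A>)"
proof (rule sympI)
  fix A B assume "exchange_step \<A> A B"
  then obtain a b where "A \<in> \<A>" "B \<in> \<A>" "a \<in> A" "b \<notin> A" "B = insert b (A - {a})"
    unfolding exchange_step_def by blast
  then have "b \<in> B" "a \<notin> B" "A = insert a (B - {b})" by auto
  then show "exchange_step \<A> B A"
    unfolding exchange_step_def using \<open>A \<in> \<A>\<close> \<open>B \<in> \<A>\<close> by blast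
qed

lemma exchange_path_mono:
  "\<A> \<subseteq> \<B> \<Longrightarrow> (exchange_step \<A>)\<^sup>*\<^sup>* A B \<Longrightarrow> (exchange_step \<B>)\<^sup>*\<^sup>* A B"
  by (erule rtranclp_mono [THEN predicate2D, rotated]) (auto simp: exchange_step_def)

lemma exchange_path_mem:
  "(exchange_step \<A>)\<^sup>*\<^sup>* A B \<Longrightarrow> A \<in> \<A> \<Longrightarrow> B \<in> \<A>"
  by (induction rule: rtranclp_induct) (auto simp: exchange_step_def)

definition exchange_connected :: "'v set set \<Rightarrow> bool" where
  "exchange_connected \<U> \<longleftrightarrow>
     (\<forall>W. \<forall>A\<in>\<U>. \<forall>B\<in>\<U>. A \<subseteq> W \<longrightarrow> B \<subseteq> W \<longrightarrow> (exchange_step {U\<in>\<U>. U \<subseteq> W})\<^sup>*\<^sup>* A B)"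

definition exchange_syzygy :: "'v set \<Rightarrow> 'v set \<Rightarrow> 'v \<Rightarrow> 'v \<Rightarrow> ('v,'k::field) poly \<Rightarrow> ('v,'k) poly" where
  "exchange_syzygy A B a b =
     (\<lambda>g. if g = set_monomial A then var b else if g = set_monomial B then - var a else 0)"

lemma exchange_syzygy_linear:
  fixes \<U> :: "('v::finite) set set"
  assumes "A \<in> \<U>" "B \<in> \<U>" "a \<in> A" "b \<notin> A" "B = insert b (A - {a})"
  shows "(exchange_syzygy A B a b :: ('v,'k::field) poly \<Rightarrow> _) \<in> linear_syzygies (set_monomial ` \<U>)"
proof -
  let ?X = "set_monomial :: 'v set \<Rightarrow> ('v,'k) poly"
  from assms have aB: "a \<notin> B" and ins: "insert a B = insert b A" by auto
  have AB: "?X A \<noteq> ?X B" using assms by auto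
  have "(\<Sum>g\<in>?X ` \<U>. exchange_syzygy A B a b g * g) =
      (\<Sum>g\<in>?X ` \<U>. (if g = ?X A then var b * ?X A else 0)
        + (if g = ?X B then - (var a * ?X B) else 0))"
    by (rule sum.cong) (auto simp: exchange_syzygy_def AB)
  also have "\<dots> = var b * ?X A - var a * ?X B"
    using assms by (simp add: sum.distrib)
  also have "\<dots> = 0"
    using var_mult_set_monomial [of A b, where 'k='k] var_mult_set_monomial [of B a, where 'k='k]
      assms(4) aB ins by simp
  finally have "(\<Sum>g\<in>?X ` \<U>. exchange_syzygy A B a b g * g) = 0" .
  moreover have "homogeneous (exchange_syzygy A B a b g :: ('v,'k) poly) 1" for g
    using homogeneous_var[of a] homogeneous_var[of b]
    unfolding exchange_syzygy_def homogeneous_def by auto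
  moreover have "exchange_syzygy A B a b g = 0" if "g \<notin> ?X ` \<U>" for g
    using that assms unfolding exchange_syzygy_def by auto
  ultimately show ?thesis
    unfolding linear_syzygies_def syzygies_def by blast
qed

definition graded_unit :: "'v set \<Rightarrow> ('v \<Rightarrow>\<^sub>0 nat) \<Rightarrow> ('v,'k::field) poly \<Rightarrow> ('v,'k) poly" where
  "graded_unit U m =
     (\<lambda>g. if g = set_monomial U then Poly_Mapping.single (m - set_exponent U) 1 else 0)"

lemma graded_unit_diff_step:
  fixes \<U> :: "('v::finite) set set"
  assumes "exchange_step {U\<in>\<U>. U \<subseteq> Poly_Mapping.keys m} A B"
  shows "graded_unit A m - graded_unit B m
    \<in> syz.span (linear_syzygies (set_monomial ` \<U> :: ('v,'k::field) poly set))"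
proof -
  obtain a b where U: "A \<in> \<U>" "B \<in> \<U>" "A \<subseteq> Poly_Mapping.keys m" "B \<subseteq> Poly_Mapping.keys m"
    and ab: "a \<in> A" "b \<notin> A" "B = insert b (A - {a})"
    using assms unfolding exchange_step_def by blast
  have AB: "(set_monomial A :: ('v,'k) poly) \<noteq> set_monomial B" using ab by auto
  have ins: "insert b A = insert a B" using ab by blast
  have shiftA: "m - set_exponent (insert b A) + Poly_Mapping.single b 1 = m - set_exponent A"
    by (rule diff_set_exponent_insert) (use U ab in auto)
  have shiftB: "m - set_exponent (insert a B) + Poly_Mapping.single a 1 = m - set_exponent B"
    by (rule diff_set_exponent_insert) (use U ab in auto)
  have "graded_unit A m - graded_unit B m =
      (\<lambda>g. Poly_Mapping.single (m - set_exponent (insert b A)) 1 * exchange_syzygy A B a b g)"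
    using AB shiftA shiftB ins
    by (auto simp: fun_eq_iff graded_unit_def exchange_syzygy_def var_def mult_single single_uminus)
  also have "\<dots> \<in> syz.span (linear_syzygies (set_monomial ` \<U>))"
    using exchange_syzygy_linear[OF U(1,2) ab] by (intro syz.span_scale syz.span_base)
  finally show ?thesis .
qed

lemma graded_unit_diff_path:
  fixes \<U> :: "('v::finite) set set"
  assumes "(exchange_step {U\<in>\<U>. U \<subseteq> Poly_Mapping.keys m})\<^sup>*\<^sup>* A B"
  shows "graded_unit A m - graded_unit B m
    \<in> syz.span (linear_syzygies (set_monomial ` \<U> :: ('v,'k::field) poly set))"
  using assms
proof (induction rule: rtranclp_induct)
  case (step B C)
  have "graded_unit A m - graded_unit C m
      = (graded_unit A m - graded_unit B m) + (graded_unit B m - graded_unit C m)"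
    by simp
  then show ?case
    by (metis syz.span_add step.IH graded_unit_diff_step[OF step.hyps(2)])
qed (simp only: diff_self syz.span_zero)

text \<open>A pair \<open>(U, \<alpha>)\<close> stands for the term \<open>x\<^sup>\<alpha>\<close> in the coordinate of \<open>x\<^sub>U\<close>.\<close>

definition syzygy_terms ::
    "'v set set \<Rightarrow> (('v,'k::field) poly \<Rightarrow> ('v,'k) poly) \<Rightarrow> ('v set \<times> ('v \<Rightarrow>\<^sub>0 nat)) set" where
  "syzygy_terms \<U> \<sigma> = (SIGMA U:\<U>. Poly_Mapping.keys (\<sigma> (set_monomial U)))"

lemma finite_syzygy_terms [simp]:
  "finite (syzygy_terms (\<U> :: ('v::finite) set set) \<sigma>)"
  unfolding syzygy_terms_def by auto

definition term_coeff :: "(('v,'k::field) poly \<Rightarrow> ('v,'k) poly) \<Rightarrow> 'v set \<times> ('v \<Rightarrow>\<^sub>0 nat) \<Rightarrow> 'k" where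
  "term_coeff \<sigma> t = Poly_Mapping.lookup (\<sigma> (set_monomial (fst t))) (snd t)"

definition term_degree :: "'v set \<times> ('v \<Rightarrow>\<^sub>0 nat) \<Rightarrow> 'v \<Rightarrow>\<^sub>0 nat" where
  "term_degree t = snd t + set_exponent (fst t)"

lemma syzygy_expansion:
  fixes \<U> :: "('v::finite) set set" and \<sigma> :: "('v,'k::field) poly \<Rightarrow> ('v,'k) poly"
  assumes "\<forall>g. g \<notin> set_monomial ` \<U> \<longrightarrow> \<sigma> g = 0"
  shows "\<sigma> = (\<Sum>t\<in>syzygy_terms \<U> \<sigma>.
      (\<lambda>g. Poly_Mapping.single 0 (term_coeff \<sigma> t) * graded_unit (fst t) (term_degree t) g))"
proof
  fix h :: "('v,'k) poly"
  have summand: "Poly_Mapping.single 0 c * graded_unit U (\<alpha> + set_exponent U) h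
      = (if h = set_monomial U then Poly_Mapping.single \<alpha> c else 0)" for U \<alpha> c
    by (simp add: graded_unit_def mult_single)
  have coordinate: "(\<Sum>\<alpha>\<in>Poly_Mapping.keys p. if h = set_monomial U
        then Poly_Mapping.single \<alpha> (Poly_Mapping.lookup p \<alpha>) else 0)
      = (if h = set_monomial U then p else 0)" for U and p :: "('v,'k) poly"
    by (cases "h = set_monomial U") (simp_all flip: poly_mapping_sum_single)
  have "(\<Sum>t\<in>syzygy_terms \<U> \<sigma>.
        Poly_Mapping.single 0 (term_coeff \<sigma> t) * graded_unit (fst t) (term_degree t) h)
      = (\<Sum>U\<in>\<U>. \<Sum>\<alpha>\<in>Poly_Mapping.keys (\<sigma> (set_monomial U)). if h = set_monomial U
          then Poly_Mapping.single \<alpha> (Poly_Mapping.lookup (\<sigma> (set_monomial U)) \<alpha>) else 0)"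
    unfolding syzygy_terms_def term_coeff_def term_degree_def
    by (subst sum.Sigma) (simp_all add: summand split_def)
  also have "\<dots> = (\<Sum>U\<in>\<U>. if h = set_monomial U then \<sigma> (set_monomial U) else 0)"
    by (simp only: coordinate)
  also have "\<dots> = \<sigma> h"
  proof (cases "h \<in> set_monomial ` \<U>")
    case True
    then obtain U\<^sub>0 where "U\<^sub>0 \<in> \<U>" "h = set_monomial U\<^sub>0" by blast
    then show ?thesis by simp
  next
    case False
    then have "\<sigma> h = 0" using assms by blast
    moreover have "h \<noteq> set_monomial U" if "U \<in> \<U>" for U using False that by blast
    ultimately show ?thesis by (simp add: sum.neutral)
  qed
  finally show "\<sigma> h = (\<Sum>t\<in>syzygy_terms \<U> \<sigma>.
      (\<lambda>g. Poly_Mapping.single 0 (term_coeff \<sigma> t) * graded_unit (fst t) (term_degree t) g)) h"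
    by (simp add: sum_fun_apply)
qed

lemma syzygy_degree_sum:
  fixes \<U> :: "('v::finite) set set" and \<sigma> :: "('v,'k::field) poly \<Rightarrow> ('v,'k) poly"
  assumes "\<sigma> \<in> syzygies (set_monomial ` \<U>)"
  shows "(\<Sum>t\<in>{t\<in>syzygy_terms \<U> \<sigma>. term_degree t = m}. term_coeff \<sigma> t) = 0"
proof -
  have expand: "\<sigma> (set_monomial U) * set_monomial U
      = (\<Sum>\<alpha>\<in>Poly_Mapping.keys (\<sigma> (set_monomial U)).
          Poly_Mapping.single (\<alpha> + set_exponent U)
            (Poly_Mapping.lookup (\<sigma> (set_monomial U)) \<alpha>))" for U
    by (subst poly_mapping_sum_single) (simp add: set_monomial_def sum_distrib_right mult_single)
  have "(\<Sum>t\<in>syzygy_terms \<U> \<sigma>. Poly_Mapping.single (term_degree t) (term_coeff \<sigma> t))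
      = (\<Sum>U\<in>\<U>. \<sigma> (set_monomial U) * set_monomial U)"
    unfolding syzygy_terms_def term_coeff_def term_degree_def expand
    by (subst sum.Sigma) (simp_all add: split_def)
  also have "\<dots> = 0"
    using assms unfolding syzygies_def by (simp add: sum.reindex inj_on_def)
  finally have "Poly_Mapping.lookup
      (\<Sum>t\<in>syzygy_terms \<U> \<sigma>. Poly_Mapping.single (term_degree t) (term_coeff \<sigma> t)) m = 0"
    by simp
  then show ?thesis
    by (simp add: lookup_sum lookup_single when_def sum.inter_filter [symmetric] syzygy_terms_def)
qed

theorem linearly_related_if_exchange_connected:
  fixes \<U> :: "('v::finite) set set"
  assumes "exchange_connected \<U>"
  shows "linearly_related (set_monomial ` \<U> :: ('v,'k::field) poly set)"
  unfolding linearly_related_iff_span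
proof
  fix \<sigma> :: "('v,'k) poly \<Rightarrow> ('v,'k) poly"
  assume syz: "\<sigma> \<in> syzygies (set_monomial ` \<U>)"
  define T where "T = syzygy_terms \<U> \<sigma>"
  define c where "c t = (Poly_Mapping.single 0 (term_coeff \<sigma> t) :: ('v,'k) poly)" for t
  define base where "base m = (SOME U. U \<in> \<U> \<and> U \<subseteq> Poly_Mapping.keys m)" for m :: "'v \<Rightarrow>\<^sub>0 nat"
  define u where "u t = (graded_unit (fst t) (term_degree t) :: ('v,'k) poly \<Rightarrow> ('v,'k) poly)" for t
  define u\<^sub>0 where
    "u\<^sub>0 t = (graded_unit (base (term_degree t)) (term_degree t) :: ('v,'k) poly \<Rightarrow> ('v,'k) poly)" for t
  have T: "fst t \<in> \<U>" "fst t \<subseteq> Poly_Mapping.keys (term_degree t)" if "t \<in> T" for t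
    using that unfolding T_def syzygy_terms_def term_degree_def
    by (auto simp: in_keys_iff lookup_add lookup_set_exponent)
  have base: "base (term_degree t) \<in> \<U>" "base (term_degree t) \<subseteq> Poly_Mapping.keys (term_degree t)"
    if "t \<in> T" for t
    unfolding base_def using someI_ex [of "\<lambda>U. U \<in> \<U> \<and> U \<subseteq> Poly_Mapping.keys (term_degree t)"]
      T [OF that] by blast+
  have base_terms: "(\<Sum>t\<in>T. (\<lambda>g. c t * u\<^sub>0 t g)) = 0"
    unfolding u\<^sub>0_def
    by (rule syz.sum_scale_fibres_eq_zero
        [where deg = term_degree and v = "\<lambda>m. graded_unit (base m) m"])
      (simp_all add: T_def c_def single_sum [symmetric] syzygy_degree_sum [OF syz])
  have "\<sigma> = (\<Sum>t\<in>T. (\<lambda>g. c t * u t g))"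
    unfolding T_def c_def u_def
    by (rule syzygy_expansion) (use syz in \<open>simp add: syzygies_def\<close>)
  also have "\<dots> = (\<Sum>t\<in>T. (\<lambda>g. c t * (u t - u\<^sub>0 t) g))"
    by (simp only: syz.scale_right_diff_distrib sum_subtractf base_terms diff_zero)
  also have "\<dots> \<in> syz.span (linear_syzygies (set_monomial ` \<U>))"
  proof (intro syz.span_sum syz.span_scale)
    fix t assume "t \<in> T"
    then have "(exchange_step {U\<in>\<U>. U \<subseteq> Poly_Mapping.keys (term_degree t)})\<^sup>*\<^sup>*
        (fst t) (base (term_degree t))"
      using assms T base unfolding exchange_connected_def by simp
    then show "u t - u\<^sub>0 t \<in> syz.span (linear_syzygies (set_monomial ` \<U>))"
      unfolding u_def u\<^sub>0_def by (rule graded_unit_diff_path)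
  qed
  finally show "\<sigma> \<in> syz.span (linear_syzygies (set_monomial ` \<U>))" .
qed

section \<open>Exchange paths between matchings\<close>

definition matching_vertex_sets :: "'v set set \<Rightarrow> nat \<Rightarrow> 'v set set" where
  "matching_vertex_sets E k = {\<Union>M | M. matching E M \<and> card M = k}"

lemma prod_edge_poly_matching:
  fixes M :: "('v::finite) set set"
  assumes "matching E M"
  shows "(\<Prod>e\<in>M. edge_poly e) = (set_monomial (\<Union>M) :: ('v,'k::field) poly)"
proof -
  have "(\<Prod>e\<in>M. edge_poly e :: ('v,'k) poly) = (\<Prod>e\<in>M. \<Prod>v\<in>e. var v)"
    by (simp add: edge_poly_def)
  also have "\<dots> = (\<Prod>v\<in>\<Union>M. var v)"
    using assms unfolding matching_def by (subst prod.Union_disjoint) auto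
  finally show ?thesis by (simp add: prod_var_eq_set_monomial)
qed

lemma sq_free_power_gens_eq:
  "(sq_free_power_gens E k :: ('v::finite,'k::field) poly set)
    = set_monomial ` matching_vertex_sets E k"
  unfolding sq_free_power_gens_def matching_vertex_sets_def image_Collect [symmetric] image_image
  by (intro image_cong) (auto simp: prod_edge_poly_matching)

lemma matching_subset: "matching E M \<Longrightarrow> e \<in> M \<Longrightarrow> e \<in> E"
  unfolding matching_def by blast

lemma matching_disjoint: "matching E M \<Longrightarrow> e \<in> M \<Longrightarrow> f \<in> M \<Longrightarrow> e \<noteq> f \<Longrightarrow> e \<inter> f = {}"
  unfolding matching_def by blast

lemma matching_singleton: "e \<in> E \<Longrightarrow> matching E {e}"
  unfolding matching_def by blast

lemma card_le_nu0:
  fixes E :: "('v::finite) set set"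
  assumes "restricted_matching E R"
  shows "card R \<le> nu0 E"
proof -
  have "{card M |M. restricted_matching E M} \<subseteq> {..card (UNIV :: 'v set set)}"
    by (auto intro: card_mono)
  then have "finite (insert 0 {card M |M. restricted_matching E M})"
    using finite_subset by blast
  then show ?thesis
    unfolding nu0_def by (rule Max_ge) (use assms in blast)
qed

lemma gap_sym: "gap E e f \<Longrightarrow> gap E f e"
  unfolding gap_def by (auto simp: Int_commute) (metis insert_commute)

lemma edge_eq_doubleton:
  assumes "simple_graph E" "e \<in> E" "x \<in> e"
  obtains y where "y \<noteq> x" "e = {x, y}"
proof -
  obtain a b where "a \<noteq> b" "e = {a, b}"
    using assms(1,2) unfolding simple_graph_def by (meson card_2_iff)
  then show ?thesis using that assms(3) by (metis insert_commute insert_iff singleton_iff)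
qed

lemma exchange_step_matchings:
  assumes "matching E M" "card M = k" "matching E M'" "card M' = k" "\<Union>M \<subseteq> V" "\<Union>M' \<subseteq> V"
    and "a \<in> \<Union>M" "b \<notin> \<Union>M" "\<Union>M' = insert b (\<Union>M - {a})"
  shows "exchange_step {U \<in> matching_vertex_sets E k. U \<subseteq> V} (\<Union>M) (\<Union>M')"
  unfolding exchange_step_def matching_vertex_sets_def using assms by blast

text \<open>Compared lexicographically, by the order of \<open>Product_Lexorder\<close>.\<close>

definition matching_dist :: "'a set set \<Rightarrow> 'a set set \<Rightarrow> nat \<times> nat" where
  "matching_dist M N = (card (\<Union>M - \<Union>N), card (M - N))"

lemma matching_dist_less_vertices:
  fixes M :: "('a::finite) set set"
  shows "\<Union>M' - \<Union>N \<subset> \<Union>M - \<Union>N \<Longrightarrow> matching_dist M' N < matching_dist M N"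
  unfolding matching_dist_def by (simp add: psubset_card_mono)

lemma matching_dist_less_edges:
  fixes M :: "('a::finite) set set"
  shows "\<Union>M' - \<Union>N \<subseteq> \<Union>M - \<Union>N \<Longrightarrow> M' - N \<subset> M - N \<Longrightarrow> matching_dist M' N < matching_dist M N"
  unfolding matching_dist_def by (simp add: psubset_card_mono card_mono)

text \<open>The exchange path stays inside \<open>V(M) \<union> V(N)\<close>, hence below every \<open>W\<close> containing both.\<close>

definition moves_closer :: "'v set set \<Rightarrow> nat \<Rightarrow> 'v set set \<Rightarrow> 'v set set \<Rightarrow> bool" where
  "moves_closer E k M N \<longleftrightarrow> (\<exists>M'. matching E M' \<and> card M' = k \<and>
     (exchange_step {U \<in> matching_vertex_sets E k. U \<subseteq> \<Union>M \<union> \<Union>N})\<^sup>*\<^sup>* (\<Union>M) (\<Union>M') \<and>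
     matching_dist M' N < matching_dist M N)"

context
  fixes E :: "('v::finite) set set" and k :: nat
  assumes simple: "simple_graph E"
begin

lemma edge_nonempty: "e \<in> E \<Longrightarrow> e \<noteq> {}"
  using simple unfolding simple_graph_def by fastforce

lemma card_Union_matching: "matching E M \<Longrightarrow> card (\<Union>M) = 2 * card M"
proof -
  assume M: "matching E M"
  then have "card (\<Union>M) = (\<Sum>e\<in>M. card e)"
    by (intro card_Union_disjoint) (auto simp: matching_def pairwise_def disjnt_def)
  also have "\<dots> = 2 * card M"
    using M simple unfolding matching_def simple_graph_def by (simp add: subset_eq)
  finally show ?thesis .
qed

lemma matching_dist_sym:
  assumes "matching E M" "card M = k" "matching E N" "card N = k"
  shows "matching_dist M N = matching_dist N M"
proof -
  have "card (\<Union>M) = card (\<Union>N)" using assms card_Union_matching by simp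
  then show ?thesis
    unfolding matching_dist_def using assms by (simp add: card_Diff_subset_Int Int_commute)
qed

lemma no_two_gaps:
  assumes "nu0 E \<le> 2" "gap E e f" "gap E e h" "f \<inter> h = {}"
  shows False
proof -
  have "e \<in> E" "f \<in> E" "h \<in> E" "e \<inter> f = {}" "e \<inter> h = {}"
    using assms unfolding gap_def by auto
  then have distinct: "e \<noteq> f" "e \<noteq> h" "f \<noteq> h"
    using assms(4) edge_nonempty by auto
  have "restricted_matching E {e, f, h}"
    unfolding restricted_matching_def matching_def
    using assms \<open>e \<in> E\<close> \<open>f \<in> E\<close> \<open>h \<in> E\<close> \<open>e \<inter> f = {}\<close> \<open>e \<inter> h = {}\<close> distinct
    by (auto simp: Int_commute)
  then have "card {e, f, h} \<le> nu0 E" by (rule card_le_nu0)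
  then show False using distinct assms(1) by simp
qed

lemma matching_replace:
  assumes M: "matching E M" and R: "R \<subseteq> M" and R': "matching E R'" "card R' = card R"
    and disj: "\<Union>R' \<inter> (\<Union>M - \<Union>R) = {}"
  shows "matching E ((M - R) \<union> R')" "card ((M - R) \<union> R') = card M"
    "\<Union>((M - R) \<union> R') = (\<Union>M - \<Union>R) \<union> \<Union>R'"
proof -
  note disjM = matching_disjoint [OF M] and disjR' = matching_disjoint [OF R'(1)]
  have "x \<notin> \<Union>R" if "x \<in> f" "f \<in> M - R" for x f
  proof
    assume "x \<in> \<Union>R"
    then obtain g where "g \<in> R" "x \<in> g" by blast
    then show False using disjM[of f g] that R by blast
  qed
  then have kept: "\<Union>(M - R) = \<Union>M - \<Union>R" by blast
  have cross: "f \<inter> g = {}" "g \<inter> f = {}" if "f \<in> M - R" "g \<in> R'" for f g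
  proof -
    have "f \<subseteq> \<Union>M - \<Union>R" "g \<subseteq> \<Union>R'" using that kept by blast+
    then show "f \<inter> g = {}" "g \<inter> f = {}" using disj by blast+
  qed
  have "f \<inter> g = {}" if "f \<in> (M - R) \<union> R'" "g \<in> (M - R) \<union> R'" "f \<noteq> g" for f g
    using that disjM disjR' cross by (elim UnE) auto
  moreover have "(M - R) \<union> R' \<subseteq> E"
    using M R' matching_subset by blast
  ultimately show "matching E ((M - R) \<union> R')"
    unfolding matching_def by blast
  have "(M - R) \<inter> R' = {}"
  proof (rule ccontr)
    assume "(M - R) \<inter> R' \<noteq> {}"
    then obtain f where "f \<in> M - R" "f \<in> R'" by blast
    then have "f = {}" using cross by blast
    moreover have "f \<in> E" using \<open>f \<in> R'\<close> R' matching_subset by blast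
    ultimately show False using edge_nonempty by blast
  qed
  then show "card ((M - R) \<union> R') = card M"
    using R R' by (simp add: card_Un_disjoint card_Diff_subset card_mono)
  show "\<Union>((M - R) \<union> R') = (\<Union>M - \<Union>R) \<union> \<Union>R'"
    using kept by blast
qed

lemma swap_moves_closer:
  assumes M: "matching E M" "card M = k" and N: "matching E N" "card N = k"
    and e: "e \<in> M" "e \<notin> N" "e = {a, a'}" "a \<noteq> a'"
    and g: "{a', c} \<in> N" "c \<notin> \<Union>M"
  shows "moves_closer E k M N"
proof -
  define M' where "M' = (M - {e}) \<union> {{a', c}}"
  have "{a', c} \<in> E" using N g matching_subset by blast
  moreover have "\<Union>{{a', c}} \<inter> (\<Union>M - \<Union>{e}) = {}" using e g by auto
  ultimately have M': "matching E M'" "card M' = card M" "\<Union>M' = (\<Union>M - e) \<union> {a', c}"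
    using matching_replace[OF M(1), of "{e}" "{{a', c}}"] e(1) matching_singleton
    unfolding M'_def by auto
  have "a' \<in> \<Union>M" "c \<in> \<Union>N" using e g by blast+
  then have U: "\<Union>M' = insert c (\<Union>M - {a})" using M'(3) e by auto
  have "exchange_step {U \<in> matching_vertex_sets E k. U \<subseteq> \<Union>M \<union> \<Union>N} (\<Union>M) (\<Union>M')"
    by (rule exchange_step_matchings [where a = a and b = c]) (use M M' U e g \<open>c \<in> \<Union>N\<close> in auto)
  moreover have "matching_dist M' N < matching_dist M N"
  proof (rule matching_dist_less_edges)
    show "\<Union>M' - \<Union>N \<subseteq> \<Union>M - \<Union>N" unfolding U using \<open>c \<in> \<Union>N\<close> by blast
    show "M' - N \<subset> M - N" using e g unfolding M'_def by blast
  qed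
  ultimately show ?thesis
    unfolding moves_closer_def using M M' by auto
qed

lemma shared_vertex_moves_closer:
  assumes M: "matching E M" "card M = k" and N: "matching E N" "card N = k"
    and e: "e \<in> M" "a \<in> e" "a \<notin> \<Union>N" and meet: "e \<inter> \<Union>N \<noteq> {}"
  shows "moves_closer E k M N \<or> moves_closer E k N M"
proof -
  obtain a' where a': "a' \<noteq> a" "e = {a, a'}"
    using edge_eq_doubleton[OF simple matching_subset[OF M(1) e(1)] e(2)] by blast
  then have "a' \<in> \<Union>N" using meet e(3) by auto
  then obtain g where g: "g \<in> N" "a' \<in> g" by blast
  obtain c where c: "c \<noteq> a'" "g = {a', c}"
    using edge_eq_doubleton[OF simple matching_subset[OF N(1) g(1)] g(2)] by blast
  have "e \<notin> N" using e by blast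
  show ?thesis
  proof (cases "c \<in> \<Union>M")
    case False
    then have "moves_closer E k M N"
      using swap_moves_closer[OF M N e(1) \<open>e \<notin> N\<close> a'(2)] a'(1) g c by auto
    then show ?thesis ..
  next
    case True
    have "g \<noteq> e" using g \<open>e \<notin> N\<close> by blast
    then have "g \<notin> M" using matching_disjoint[OF M(1) _ e(1)] g(2) a'(2) by blast
    moreover have "{a', a} \<in> M" using e(1) a'(2) by (simp add: insert_commute)
    ultimately have "moves_closer E k N M"
      using swap_moves_closer[OF N M g(1), of c a' a] c True e(3) by (auto simp: insert_commute)
    then show ?thesis ..
  qed
qed

lemma adjacent_moves_closer:
  assumes M: "matching E M" "card M = k" and N: "matching E N" "card N = k"
    and e: "e \<in> M" "e \<inter> \<Union>N = {}" "y \<in> e"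
    and z: "z \<in> \<Union>N" "z \<notin> \<Union>M" and adj: "{y, z} \<in> E"
  shows "moves_closer E k M N"
proof -
  obtain y' where y': "y' \<noteq> y" "e = {y, y'}"
    using edge_eq_doubleton[OF simple matching_subset[OF M(1) e(1)] e(3)] by blast
  define M' where "M' = (M - {e}) \<union> {{y, z}}"
  have "\<Union>{{y, z}} \<inter> (\<Union>M - \<Union>{e}) = {}" using y' z by auto
  then have M': "matching E M'" "card M' = card M" "\<Union>M' = (\<Union>M - e) \<union> {y, z}"
    using matching_replace[OF M(1), of "{e}" "{{y, z}}"] e(1) matching_singleton[OF adj]
    unfolding M'_def by auto
  have "y \<in> \<Union>M" "y' \<in> \<Union>M - \<Union>N" using e y' by auto
  then have U: "\<Union>M' = insert z (\<Union>M - {y'})" using M'(3) y' by auto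
  have "exchange_step {U \<in> matching_vertex_sets E k. U \<subseteq> \<Union>M \<union> \<Union>N} (\<Union>M) (\<Union>M')"
    by (rule exchange_step_matchings [where a = y' and b = z]) (use M M' U z \<open>y' \<in> \<Union>M - \<Union>N\<close> in auto)
  moreover have "matching_dist M' N < matching_dist M N"
    by (rule matching_dist_less_vertices) (use U z \<open>y' \<in> \<Union>M - \<Union>N\<close> in auto)
  ultimately show ?thesis
    unfolding moves_closer_def using M M' by auto
qed

lemma two_neighbours_moves_closer:
  assumes M: "matching E M" "card M = k" and N: "matching E N" "card N = k"
    and e: "e \<in> M" "e \<inter> \<Union>N = {}" "e = {p, y}" "p \<noteq> y"
    and h: "h \<in> M" "h \<noteq> e" "h = {q, q'}" "q \<noteq> q'"
    and p': "p' \<in> \<Union>N" "p' \<notin> \<Union>M"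
    and adj: "{p, q} \<in> E" "{p', q'} \<in> E"
  shows "moves_closer E k M N"
proof -
  have "e \<inter> h = {}" using matching_disjoint[OF M(1) e(1) h(1)] h(2) by blast
  then have distinct: "p \<noteq> q" "p \<noteq> q'" "y \<noteq> q" "y \<noteq> q'" "p' \<noteq> p" "p' \<noteq> q" "p' \<noteq> q'"
    using e h p' by auto
  define M2 where "M2 = (M - {e, h}) \<union> {{p, q}, {p', q'}}"
  have "{p, q} \<noteq> {p', q'}" using distinct by (auto simp: doubleton_eq_iff)
  then have "card {{p, q}, {p', q'}} = card {e, h}" using h(2) by simp
  moreover have "matching E {{p, q}, {p', q'}}"
    using adj distinct h(4) unfolding matching_def by auto
  moreover have "\<Union>{{p, q}, {p', q'}} \<inter> (\<Union>M - \<Union>{e, h}) = {}" using e h p' by auto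
  ultimately have M2: "matching E M2" "card M2 = card M" "\<Union>M2 = (\<Union>M - (e \<union> h)) \<union> {p, q, p', q'}"
    using matching_replace[OF M(1), of "{e, h}" "{{p, q}, {p', q'}}"] e(1) h(1)
    unfolding M2_def by auto
  have "e \<subseteq> \<Union>M" "h \<subseteq> \<Union>M" "y \<in> \<Union>M - \<Union>N" using e h by auto
  then have U: "\<Union>M2 = insert p' (\<Union>M - {y})" using M2(3) e h distinct by auto
  have "exchange_step {U \<in> matching_vertex_sets E k. U \<subseteq> \<Union>M \<union> \<Union>N} (\<Union>M) (\<Union>M2)"
    by (rule exchange_step_matchings [where a = y and b = p']) (use M M2 U p' \<open>y \<in> \<Union>M - \<Union>N\<close> in auto)
  moreover have "matching_dist M2 N < matching_dist M N"
    by (rule matching_dist_less_vertices) (use U p' \<open>y \<in> \<Union>M - \<Union>N\<close> in auto)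
  ultimately show ?thesis
    unfolding moves_closer_def using M M2 by auto
qed

lemma common_neighbour_moves_closer:
  assumes M: "matching E M" "card M = k" and N: "matching E N" "card N = k"
    and e: "e \<in> M" "e \<inter> \<Union>N = {}" "e = {p, y}" "p \<noteq> y"
    and h: "h \<in> M" "h \<noteq> e" "h = {q, z}" "q \<noteq> z"
    and f: "f \<in> N" "f \<inter> \<Union>M = {}" "f = {p', d}" "p' \<noteq> d"
    and adj: "{p, q} \<in> E" "{p', q} \<in> E"
  shows "moves_closer E k M N"
proof -
  define V where "V = \<Union>M"
  have "e \<inter> h = {}" using matching_disjoint[OF M(1) e(1) h(1)] h(2) by blast
  moreover have "e \<subseteq> V" "h \<subseteq> V" "f \<inter> V = {}" using e h f unfolding V_def by auto
  ultimately have V: "p \<in> V" "y \<in> V" "q \<in> V" "z \<in> V" "p' \<notin> V" "d \<notin> V"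
    and distinct: "p \<noteq> q" "y \<noteq> q" "y \<noteq> z" "p \<noteq> z"
    using e(3) h(3) f(3) by auto
  have "f \<subseteq> \<Union>N" "y \<notin> \<Union>N" using e f by auto
  define M1 where "M1 = (M - {h}) \<union> {{q, p'}}"
  have "\<Union>{{q, p'}} \<inter> (V - \<Union>{h}) = {}" using h(3) V by auto
  then have M1: "matching E M1" "card M1 = card M" "\<Union>M1 = (V - h) \<union> {q, p'}"
    using matching_replace[OF M(1), of "{h}" "{{q, p'}}"] h(1) matching_singleton adj(2)
    unfolding M1_def V_def by (auto simp: insert_commute)
  have U1: "\<Union>M1 = insert p' (V - {z})" using M1(3) h(3,4) V by auto
  define M2 where "M2 = (M - {e, h}) \<union> {{p, q}, f}"
  have "{p, q} \<noteq> f" using V f(3) by (auto simp: doubleton_eq_iff)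
  then have "card {{p, q}, f} = card {e, h}" using h(2) by simp
  moreover have "matching E {{p, q}, f}"
    using adj matching_subset[OF N(1) f(1)] V f(3) unfolding matching_def by auto
  moreover have "\<Union>{{p, q}, f} \<inter> (V - \<Union>{e, h}) = {}" using e(3) h(3) f(3) V by auto
  ultimately have M2: "matching E M2" "card M2 = card M" "\<Union>M2 = (V - (e \<union> h)) \<union> {p, q} \<union> f"
    using matching_replace[OF M(1), of "{e, h}" "{{p, q}, f}"] e(1) h(1)
    unfolding M2_def V_def by auto
  have U2: "\<Union>M2 = insert d (\<Union>M1 - {y})"
    unfolding U1 M2(3) using e(3,4) h(3,4) f(3) V distinct by auto
  have "p' \<in> \<Union>N" "d \<in> \<Union>N" using f by auto
  let ?step = "exchange_step {U \<in> matching_vertex_sets E k. U \<subseteq> V \<union> \<Union>N}"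
  have "?step V (\<Union>M1)"
    unfolding V_def
    by (rule exchange_step_matchings [where a = z and b = p'])
      (use M M1(1,2) U1 V \<open>p' \<in> \<Union>N\<close> in \<open>auto simp: V_def\<close>)
  moreover have "?step (\<Union>M1) (\<Union>M2)"
    by (rule exchange_step_matchings [where a = y and b = d])
      (use M M1(1,2) M2(1,2) U1 U2 V distinct f(4) \<open>p' \<in> \<Union>N\<close> \<open>d \<in> \<Union>N\<close> in auto)
  moreover have "matching_dist M2 N < matching_dist M N"
    by (rule matching_dist_less_vertices)
      (use U1 U2 V \<open>p' \<in> \<Union>N\<close> \<open>d \<in> \<Union>N\<close> \<open>y \<notin> \<Union>N\<close> in \<open>auto simp: V_def\<close>)
  ultimately show ?thesis
    unfolding moves_closer_def V_def using M M2
    by (auto intro: converse_rtranclp_into_rtranclp)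
qed

lemma gap_moves_closer:
  assumes nu0: "nu0 E \<le> 2" and k: "k \<ge> 2"
    and M: "matching E M" "card M = k" and N: "matching E N" "card N = k"
    and e: "e \<in> M" "e \<inter> \<Union>N = {}" and f: "f \<in> N" "f \<inter> \<Union>M = {}" and gap: "gap E e f"
  shows "moves_closer E k M N"
proof -
  have "\<not> M \<subseteq> {e}" using card_mono[of "{e}" M] M(2) k by auto
  then obtain h where h: "h \<in> M" "h \<noteq> e" by blast
  have E: "e \<in> E" "f \<in> E" "h \<in> E" using M N e f h matching_subset by blast+
  have "e \<inter> h = {}" "f \<inter> h = {}"
    using matching_disjoint[OF M(1) e(1) h(1)] h f(2) by blast+
  have "\<not> gap E e h" using no_two_gaps[OF nu0 gap _ \<open>f \<inter> h = {}\<close>] by blast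
  then obtain p q where pq: "p \<in> e" "q \<in> h" "{p, q} \<in> E"
    using E \<open>e \<inter> h = {}\<close> unfolding gap_def by blast
  have "\<not> gap E f h" using no_two_gaps[OF nu0 gap_sym[OF gap] _ \<open>e \<inter> h = {}\<close>] by blast
  then obtain p' q' where pq': "p' \<in> f" "q' \<in> h" "{p', q'} \<in> E"
    using E \<open>f \<inter> h = {}\<close> unfolding gap_def by blast
  obtain y where y: "y \<noteq> p" "e = {p, y}" using edge_eq_doubleton[OF simple E(1) pq(1)] by blast
  obtain d where d: "d \<noteq> p'" "f = {p', d}" using edge_eq_doubleton[OF simple E(2) pq'(1)] by blast
  obtain z where z: "z \<noteq> q" "h = {q, z}" using edge_eq_doubleton[OF simple E(3) pq(2)] by blast
  show ?thesis
  proof (cases "q' = q")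
    case True
    show ?thesis
      by (rule common_neighbour_moves_closer [OF M N e y(2) y(1) [symmetric] h z(2) z(1) [symmetric]
            f d(2) d(1) [symmetric] pq(3) pq'(3) [unfolded True]])
  next
    case False
    then have "h = {q, q'}" using z pq'(2) by auto
    moreover have "p' \<in> \<Union>N" "p' \<notin> \<Union>M" using pq'(1) f by auto
    ultimately show ?thesis
      using two_neighbours_moves_closer
          [OF M N e y(2) y(1) [symmetric] h _ False [symmetric] _ _ pq(3) pq'(3)]
      by blast
  qed
qed

lemma matchings_move_closer:
  assumes nu0: "nu0 E \<le> 2" and k: "k \<ge> 2"
    and M: "matching E M" "card M = k" and N: "matching E N" "card N = k"
    and ne: "\<Union>M \<noteq> \<Union>N"
  shows "moves_closer E k M N \<or> moves_closer E k N M"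
proof -
  have card: "card (\<Union>M) = card (\<Union>N)" using M N card_Union_matching by simp
  have "\<not> \<Union>M \<subseteq> \<Union>N" "\<not> \<Union>N \<subseteq> \<Union>M"
    using card_subset_eq[OF finite _ card] card_subset_eq[OF finite _ card [symmetric]] ne by auto
  then obtain a e c f where a: "a \<in> e" "e \<in> M" "a \<notin> \<Union>N" and c: "c \<in> f" "f \<in> N" "c \<notin> \<Union>M"
    by blast
  show ?thesis
  proof (cases "e \<inter> \<Union>N = {}")
    case False
    then show ?thesis using shared_vertex_moves_closer[OF M N a(2,1,3)] by blast
  next
    case e_out: True
    show ?thesis
    proof (cases "f \<inter> \<Union>M = {}")
      case False
      then show ?thesis using shared_vertex_moves_closer[OF N M c(2,1,3)] by blast
    next
      case f_out: True
      show ?thesis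
      proof (cases "\<exists>y\<in>e. \<exists>z\<in>f. {y, z} \<in> E")
        case True
        then obtain y z where "y \<in> e" "z \<in> f" "{y, z} \<in> E" by blast
        then have "moves_closer E k M N"
          using adjacent_moves_closer[OF M N a(2) e_out] c f_out by blast
        then show ?thesis ..
      next
        case False
        have "e \<in> E" "f \<in> E" "e \<inter> f = {}" using M N a c e_out matching_subset by blast+
        then have "gap E e f" using False unfolding gap_def by blast
        then show ?thesis using gap_moves_closer[OF nu0 k M N a(2) e_out c(2) f_out] by blast
      qed
    qed
  qed
qed

lemma exchange_path_matchings:
  assumes nu0: "nu0 E \<le> 2" and k: "k \<ge> 2"
    and "matching E M" "card M = k" "matching E N" "card N = k" "\<Union>M \<subseteq> W" "\<Union>N \<subseteq> W"
  shows "(exchange_step {U \<in> matching_vertex_sets E k. U \<subseteq> W})\<^sup>*\<^sup>* (\<Union>M) (\<Union>N)"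
  using assms(3-)
proof (induction "matching_dist M N" arbitrary: M N rule: less_induct)
  case less
  note M = less.prems(1,2) and N = less.prems(3,4)
  let ?path = "(exchange_step {U \<in> matching_vertex_sets E k. U \<subseteq> W})\<^sup>*\<^sup>*"
  have "\<Union>M \<in> matching_vertex_sets E k" "\<Union>N \<in> matching_vertex_sets E k"
    using M N unfolding matching_vertex_sets_def by blast+
  have lift: "?path A B \<and> B \<subseteq> W"
    if path: "(exchange_step {U \<in> matching_vertex_sets E k. U \<subseteq> \<Union>M \<union> \<Union>N})\<^sup>*\<^sup>* A B"
      and A: "A \<in> matching_vertex_sets E k" "A \<subseteq> \<Union>M \<union> \<Union>N" for A B
  proof
    have "\<Union>M \<union> \<Union>N \<subseteq> W" using less.prems by blast
    show "?path A B"
      by (rule exchange_path_mono [OF _ path]) (use \<open>\<Union>M \<union> \<Union>N \<subseteq> W\<close> in blast)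
    show "B \<subseteq> W"
      using exchange_path_mem [OF path] A \<open>\<Union>M \<union> \<Union>N \<subseteq> W\<close> by blast
  qed
  show ?case
  proof (cases "\<Union>M = \<Union>N")
    case False
    then consider "moves_closer E k M N" | "moves_closer E k N M"
      using matchings_move_closer[OF nu0 k M N] by blast
    then show ?thesis
    proof cases
      case 1
      then obtain M' where M': "matching E M'" "card M' = k"
        and path: "(exchange_step {U \<in> matching_vertex_sets E k. U \<subseteq> \<Union>M \<union> \<Union>N})\<^sup>*\<^sup>* (\<Union>M) (\<Union>M')"
        and closer: "matching_dist M' N < matching_dist M N"
        unfolding moves_closer_def by blast
      have "?path (\<Union>M) (\<Union>M')" "\<Union>M' \<subseteq> W"
        using lift[OF path \<open>\<Union>M \<in> matching_vertex_sets E k\<close>] by blast+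
      moreover have "?path (\<Union>M') (\<Union>N)"
        using less.hyps[OF closer M' N \<open>\<Union>M' \<subseteq> W\<close>] less.prems by blast
      ultimately show ?thesis by (meson rtranclp_trans)
    next
      case 2
      then obtain N' where N': "matching E N'" "card N' = k"
        and path: "(exchange_step {U \<in> matching_vertex_sets E k. U \<subseteq> \<Union>M \<union> \<Union>N})\<^sup>*\<^sup>* (\<Union>N) (\<Union>N')"
        and closer: "matching_dist N' M < matching_dist M N"
        unfolding moves_closer_def matching_dist_sym[OF M N] by (auto simp: Un_commute)
      have "?path (\<Union>N) (\<Union>N')" "\<Union>N' \<subseteq> W"
        using lift[OF path \<open>\<Union>N \<in> matching_vertex_sets E k\<close>] by blast+
      moreover have "?path (\<Union>N') (\<Union>M)"
        using less.hyps[OF closer N' M \<open>\<Union>N' \<subseteq> W\<close>] less.prems by blast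
      ultimately have "?path (\<Union>N) (\<Union>M)" by (meson rtranclp_trans)
      then show ?thesis
        using symp_rtranclp[OF exchange_step_sym] by (blast dest: sympD)
    qed
  qed simp
qed

theorem exchange_connected_matching_vertex_sets:
  assumes "nu0 E \<le> 2" "k \<ge> 2"
  shows "exchange_connected (matching_vertex_sets E k)"
  unfolding exchange_connected_def
proof (intro allI ballI impI)
  fix W A B
  assume "A \<in> matching_vertex_sets E k" "B \<in> matching_vertex_sets E k" "A \<subseteq> W" "B \<subseteq> W"
  then obtain M N where "matching E M" "card M = k" "A = \<Union>M" "matching E N" "card N = k" "B = \<Union>N"
    unfolding matching_vertex_sets_def by blast
  then show "(exchange_step {U \<in> matching_vertex_sets E k. U \<subseteq> W})\<^sup>*\<^sup>* A B"
    using exchange_path_matchings[OF assms, of M N W] \<open>A \<subseteq> W\<close> \<open>B \<subseteq> W\<close> by simp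
qed

end

theorem theorem3p2:
  fixes E :: "('v::finite) set set" and k :: nat
  assumes "simple_graph E"
    and "nu0 E \<le> 2"
    and "k \<ge> 2"
  shows "linearly_related (sq_free_power_gens E k :: ('v, 'k::field) poly set)"
  unfolding sq_free_power_gens_eq
  by (rule linearly_related_if_exchange_connected)
    (rule exchange_connected_matching_vertex_sets [OF assms])

end
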